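(* Consider equation (E). Assume there exist continuous non-decreasing functions $\sigma_1,\dots,\sigma_m:[t_0,\infty)\to\mathbb{R}$ such that $\tau_i(t)\le\sigma_i(t)\le t$ for all $t\ge t_0$ and $i=1,\dots,m$. For $t\ge t_0$ and $i,j\in\{1,\dots,m\}$ put $$I_{ij}(t)=\int_{\sigma_j(t)}^{t}p_i(s)\exp\Bigg(\int_{\tau_i(s)}^{\sigma_i(t)}\sum_{k=1}^{m}p_k(\xi)\exp\bigg(\int_{\tau_k(\xi)}^{\xi}\sum_{l=1}^{m}p_l(u)\,du\bigg)d\xi\Bigg)ds .$$ If $$\limsup_{t\to+\infty}\prod_{j=1}^{m}\Bigg[\prod_{i=1}^{m}I_{ij}(t)\Bigg]^{1/m}>\frac{1}{m^{m}},$$ then all solutions of (E) oscillate.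
   Context: Equation (E) is $x'(t)+\sum_{i=1}^{m}p_i(t)\,x(\tau_i(t))=0$, $t\ge t_0$, where $m\ge1$ is an integer and, for each $i$, $p_i,\tau_i:[t_0,\infty)\to[0,\infty)$ are continuous, $\tau_i(t)\le t$ for $t\ge t_0$, and $\lim_{t\to\infty}\tau_i(t)=\infty$. Let $\tau(t)=\min_i\tau_i(t)$ and $\tau_{(-1)}(t)=\sup\{s:\tau(s)\le t\}$. A solution of (E) is a function $x\in C([T_0,\infty);\mathbb{R})$ for some $T_0\ge t_0$ which is continuously differentiable on $[\tau_{(-1)}(T_0),\infty)$ and satisfies (E) for $t\ge\tau_{(-1)}(T_0)$. A solution is oscillatory if it has arbitrarily large zeros, and nonoscillatory otherwise; "all solutions oscillate" means every solution is oscillatory. *)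

theory Defs
  imports "HOL-Analysis.Analysis"
begin

definition oint :: "real \<Rightarrow> real \<Rightarrow> (real \<Rightarrow> real) \<Rightarrow> real" where
  "oint a b f = (if a \<le> b then integral {a..b} f else - integral {b..a} f)"

definition tau_min :: "nat \<Rightarrow> (nat \<Rightarrow> real \<Rightarrow> real) \<Rightarrow> real \<Rightarrow> real" where
  "tau_min m tau t = Min ((\<lambda>i. tau i t) ` {1..m})"

definition tau_inv :: "nat \<Rightarrow> real \<Rightarrow> (nat \<Rightarrow> real \<Rightarrow> real) \<Rightarrow> real \<Rightarrow> real" where
  "tau_inv m t0 tau T = Sup {s. s \<ge> t0 \<and> tau_min m tau s \<le> T}"

definition is_solution ::
  "nat \<Rightarrow> real \<Rightarrow> (nat \<Rightarrow> real \<Rightarrow> real) \<Rightarrow> (nat \<Rightarrow> real \<Rightarrow> real) \<Rightarrow> (real \<Rightarrow> real) \<Rightarrow> real \<Rightarrow> bool" where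
  "is_solution m t0 p tau x T0 \<longleftrightarrow>
     T0 \<ge> t0 \<and> continuous_on {T0..} x \<and>
     (\<exists>x'. continuous_on {tau_inv m t0 tau T0..} x' \<and>
        (\<forall>t \<ge> tau_inv m t0 tau T0.
            (x has_real_derivative x' t) (at t within {tau_inv m t0 tau T0..}) \<and>
            x' t + (\<Sum>i\<in>{1..m}. p i t * x (tau i t)) = 0))"

definition I_ij ::
  "nat \<Rightarrow> (nat \<Rightarrow> real \<Rightarrow> real) \<Rightarrow> (nat \<Rightarrow> real \<Rightarrow> real) \<Rightarrow> (nat \<Rightarrow> real \<Rightarrow> real) \<Rightarrow> nat \<Rightarrow> nat \<Rightarrow> real \<Rightarrow> real" where
  "I_ij m p tau sg i j t =
     oint (sg j t) t (\<lambda>s. p i s *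
       exp (oint (tau i s) (sg i t)
         (\<lambda>\<xi>. \<Sum>k\<in>{1..m}. p k \<xi> * exp (oint (tau k \<xi>) \<xi> (\<lambda>u. \<Sum>l\<in>{1..m}. p l u)))))"

definition oscillatory :: "(real \<Rightarrow> real) \<Rightarrow> bool" where
  "oscillatory x \<longleftrightarrow> (\<forall>T. \<exists>t\<ge>T. x t = 0)"

end

theory Submission
  imports Defs
begin

(* Proof of the oscillation criterion for  x'(t) + sum_i p_i(t) x(tau_i(t)) = 0.
   Since -x solves (E) whenever x does, and a nonvanishing continuous function has
   eventually constant sign, it suffices to refute an eventually positive solution x.
   For such x we iterate a decay estimate: if x(v) exp(int_u^v Q) <= x(u) for all large
   u <= v, then x(tau_k(u)) >= x(u) exp(int_{tau_k(u)}^u Q), so the equation gives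
   x' <= -(A Q) x with the operator A = delay_amp, (A Q)(xi) = sum_k p_k(xi) exp(int_{tau_k(xi)}^xi Q),
   and a Gronwall argument yields the same decay estimate for A Q.  Starting from Q = 0
   (x is eventually nonincreasing), two iterations give the kernel of I_ij.
   Integrating the equation over [sigma_j(t), t] then gives, with y_i = x(sigma_i(t)),
   sum_i y_i I_ij(t) <= y_j, and the AM-GM inequality turns this system into
   prod_j (prod_i I_ij(t))^(1/m) <= 1/m^m for all large t, contradicting the hypothesis. *)

lemma oint_eq_integral: "a \<le> b \<Longrightarrow> oint a b f = integral {a..b} f"
  by (simp add: oint_def)

lemma oint_split:
  fixes f :: "real \<Rightarrow> real"
  assumes "continuous_on {c..} f" "a \<ge> c" "b \<ge> c"
  shows "oint a b f = integral {c..b} f - integral {c..a} f"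
proof (cases "a \<le> b")
  case True
  have "integral {c..a} f + integral {a..b} f = integral {c..b} f"
    using assms True
    by (intro Henstock_Kurzweil_Integration.integral_combine integrable_continuous_interval
          continuous_on_subset[OF assms(1)]) auto
  then show ?thesis using True by (simp add: oint_def)
next
  case False
  have "integral {c..b} f + integral {b..a} f = integral {c..a} f"
    using assms False
    by (intro Henstock_Kurzweil_Integration.integral_combine integrable_continuous_interval
          continuous_on_subset[OF assms(1)]) auto
  then show ?thesis using False by (simp add: oint_def)
qed

lemma continuous_on_indefinite_integral_atLeast:
  fixes Q :: "real \<Rightarrow> real"
  assumes "continuous_on {c..} Q"
  shows "continuous_on {c..} (\<lambda>v. integral {c..v} Q)"
proof (rule continuous_on_eq_continuous_within[THEN iffD2], intro ballI)
  fix u assume u: "u \<in> {c..}"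
  have "continuous_on {c..u+1} (\<lambda>v. integral {c..v} Q)"
    by (intro indefinite_integral_continuous_1 integrable_continuous_interval
          continuous_on_subset[OF assms]) auto
  then have "continuous (at u within {c..u+1}) (\<lambda>v. integral {c..v} Q)"
    using u by (simp add: continuous_on_eq_continuous_within)
  moreover have "at u within {c..u+1} = at u within {c..}"
    by (rule at_within_nhd[of _ "{u-1<..<u+1}"]) auto
  ultimately show "continuous (at u within {c..}) (\<lambda>v. integral {c..v} Q)" by simp
qed

lemma continuous_on_oint:
  fixes Q :: "real \<Rightarrow> real"
  assumes Q: "continuous_on {c..} Q"
    and f: "continuous_on S f" "f ` S \<subseteq> {c..}"
    and g: "continuous_on S g" "g ` S \<subseteq> {c..}"
  shows "continuous_on S (\<lambda>u. oint (f u) (g u) Q)"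
proof -
  define F where "F = (\<lambda>v. integral {c..v} Q)"
  have F: "continuous_on {c..} F"
    unfolding F_def by (rule continuous_on_indefinite_integral_atLeast[OF Q])
  have "continuous_on S (\<lambda>u. F (g u) - F (f u))"
    by (intro continuous_on_diff continuous_on_compose2[OF F] f g)
  moreover have "oint (f u) (g u) Q = F (g u) - F (f u)" if "u \<in> S" for u
    unfolding F_def using that f g by (intro oint_split[OF Q]) auto
  ultimately show ?thesis by (simp add: continuous_on_eq)
qed

lemma exp_integral_decay:
  fixes x x' Q :: "real \<Rightarrow> real"
  assumes ab: "a \<le> b" and x: "continuous_on {a..b} x" and Q: "continuous_on {a..b} Q"
    and deriv: "\<And>u. a < u \<Longrightarrow> u < b \<Longrightarrow> (x has_real_derivative x' u) (at u)"
    and ineq: "\<And>u. a < u \<Longrightarrow> u < b \<Longrightarrow> x' u \<le> - Q u * x u"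
  shows "x b * exp (integral {a..b} Q) \<le> x a"
proof -
  define E where "E = (\<lambda>v. x v * exp (integral {a..v} Q))"
  have "E b \<le> E a"
  proof (rule DERIV_nonpos_imp_decreasing_open[OF ab])
    fix u assume u: "a < u" "u < b"
    have "((\<lambda>v. integral {a..v} Q) has_real_derivative Q u) (at u within {a..b})"
      using u by (intro integral_has_real_derivative Q) auto
    then have dI: "((\<lambda>v. integral {a..v} Q) has_real_derivative Q u) (at u)"
      using u by (simp add: at_within_Icc_at)
    have "(E has_real_derivative exp (integral {a..u} Q) * (x' u + Q u * x u)) (at u)"
      unfolding E_def using deriv[OF u] dI
      by (auto intro!: derivative_eq_intros simp: algebra_simps)
    moreover have "exp (integral {a..u} Q) * (x' u + Q u * x u) \<le> 0"
      using ineq[OF u] by (intro mult_nonneg_nonpos) auto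
    ultimately show "\<exists>y. (E has_real_derivative y) (at u) \<and> y \<le> 0" by blast
  next
    show "continuous_on {a..b} E"
      unfolding E_def
      by (intro continuous_on_mult x continuous_on_exp indefinite_integral_continuous_1
            integrable_continuous_interval Q)
  qed
  then show ?thesis by (simp add: E_def)
qed

lemma amgm_product:
  fixes a b :: "nat \<Rightarrow> real"
  assumes m: "m \<ge> 1"
    and a: "\<And>i. i \<in> {1..m} \<Longrightarrow> a i \<ge> 0" and b: "\<And>i. i \<in> {1..m} \<Longrightarrow> b i \<ge> 0"
  shows "real m * ((\<Prod>i\<in>{1..m}. a i) powr (1 / real m) * (\<Prod>i\<in>{1..m}. b i) powr (1 / real m))
         \<le> (\<Sum>i\<in>{1..m}. a i * b i)"
proof -
  have "(\<Prod>i\<in>{1..m}. a i * b i) powr (1 / card {1..m}) \<le> (\<Sum>i\<in>{1..m}. a i * b i / card {1..m})"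
    using m a b by (intro arith_geom_mean) auto
  then have "((\<Prod>i\<in>{1..m}. a i) * (\<Prod>i\<in>{1..m}. b i)) powr (1 / m) \<le> (\<Sum>i\<in>{1..m}. a i * b i) / m"
    by (simp add: sum_divide_distrib prod.distrib)
  moreover have "((\<Prod>i\<in>{1..m}. a i) * (\<Prod>i\<in>{1..m}. b i)) powr (1 / m) =
     (\<Prod>i\<in>{1..m}. a i) powr (1 / real m) * (\<Prod>i\<in>{1..m}. b i) powr (1 / real m)"
    using a b by (simp add: powr_mult prod_nonneg)
  ultimately show ?thesis using m by (simp add: field_simps)
qed

lemma amgm_matrix_bound:
  fixes y :: "nat \<Rightarrow> real" and K :: "nat \<Rightarrow> nat \<Rightarrow> real"
  assumes m: "m \<ge> 1" and y: "\<And>j. j \<in> {1..m} \<Longrightarrow> y j > 0"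
    and K: "\<And>i j. i \<in> {1..m} \<Longrightarrow> j \<in> {1..m} \<Longrightarrow> K i j \<ge> 0"
    and sub: "\<And>j. j \<in> {1..m} \<Longrightarrow> (\<Sum>i\<in>{1..m}. y i * K i j) \<le> y j"
  shows "(\<Prod>j\<in>{1..m}. (\<Prod>i\<in>{1..m}. K i j) powr (1 / real m)) \<le> 1 / real m ^ m"
proof -
  define Y where "Y = (\<Prod>i\<in>{1..m}. y i)"
  define J where "J = (\<lambda>j. (\<Prod>i\<in>{1..m}. K i j) powr (1 / real m))"
  have Y: "Y > 0" unfolding Y_def using y by (intro prod_pos) auto
  have row: "real m * (Y powr (1 / real m) * J j) \<le> y j" if j: "j \<in> {1..m}" for j
    using amgm_product[OF m, of y "\<lambda>i. K i j"] y K[OF _ j] sub[OF j]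
    unfolding Y_def J_def by force
  have "(\<Prod>j\<in>{1..m}. real m * (Y powr (1 / real m) * J j)) \<le> Y"
    unfolding Y_def by (rule prod_mono) (use row Y in \<open>auto simp: J_def Y_def\<close>)
  moreover have "(\<Prod>j\<in>{1..m}. real m * (Y powr (1 / real m) * J j))
      = real m ^ m * (Y powr (1 / real m)) ^ m * (\<Prod>j\<in>{1..m}. J j)"
    by (simp add: prod.distrib)
  moreover have "(Y powr (1 / real m)) ^ m = Y"
    using Y m by (simp add: powr_realpow[symmetric] powr_powr)
  ultimately have "Y * (real m ^ m * (\<Prod>j\<in>{1..m}. J j)) \<le> Y * 1"
    by (simp add: algebra_simps)
  then have "real m ^ m * (\<Prod>j\<in>{1..m}. J j) \<le> 1"
    using Y by (simp add: mult_le_cancel_left_pos)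
  then show ?thesis using m by (simp add: J_def field_simps)
qed

lemma eventually_constant_sign:
  fixes x :: "real \<Rightarrow> real"
  assumes c: "continuous_on {T0..} x" and nz: "\<And>t. t \<ge> T \<Longrightarrow> x t \<noteq> 0"
  obtains T1 where "\<forall>t\<ge>T1. x t > 0" | T1 where "\<forall>t\<ge>T1. - x t > 0"
proof -
  define T1 where "T1 = max T T0"
  have no_change: False if ts: "t \<ge> T1" "s \<ge> T1" "x t < 0" "x s > 0" for t s
  proof -
    have cont: "continuous_on {t..s} x" "continuous_on {s..t} x"
      using ts by (auto simp: T1_def intro!: continuous_on_subset[OF c])
    have "\<exists>z\<ge>min t s. x z = 0"
    proof (cases "t \<le> s")
      case True
      then show ?thesis using IVT'[of x t 0 s] ts cont by fastforce
    next
      case False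
      then show ?thesis using IVT2'[of x t 0 s] ts cont by fastforce
    qed
    then obtain z where "z \<ge> min t s" "x z = 0" by blast
    then show False using nz[of z] ts by (auto simp: T1_def min_def split: if_splits)
  qed
  have "(\<forall>t\<ge>T1. x t > 0) \<or> (\<forall>t\<ge>T1. - x t > 0)"
    using no_change nz by (force simp: T1_def)
  then show ?thesis using that by blast
qed

lemma is_solution_uminus:
  assumes "is_solution m t0 p tau x T0"
  shows "is_solution m t0 p tau (\<lambda>t. - x t) T0"
proof -
  define Ti where "Ti = tau_inv m t0 tau T0"
  from assms obtain x' where h: "T0 \<ge> t0" "continuous_on {T0..} x" "continuous_on {Ti..} x'"
    "\<And>t. t \<ge> Ti \<Longrightarrow> (x has_real_derivative x' t) (at t within {Ti..})"
    "\<And>t. t \<ge> Ti \<Longrightarrow> x' t + (\<Sum>i\<in>{1..m}. p i t * x (tau i t)) = 0"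
    unfolding is_solution_def Ti_def by blast
  show ?thesis unfolding is_solution_def Ti_def[symmetric]
  proof (intro conjI exI[of _ "\<lambda>t. - x' t"] allI impI)
    fix t assume t: "Ti \<le> t"
    show "((\<lambda>t. - x t) has_real_derivative - x' t) (at t within {Ti..})"
      using h(4)[OF t] by (rule DERIV_minus)
    show "- x' t + (\<Sum>i\<in>{1..m}. p i t * - x (tau i t)) = 0"
      using h(5)[OF t] by (simp add: sum_negf)
  qed (use h in \<open>auto intro: continuous_intros\<close>)
qed

definition delay_amp :: "nat \<Rightarrow> (nat \<Rightarrow> real \<Rightarrow> real) \<Rightarrow> (nat \<Rightarrow> real \<Rightarrow> real) \<Rightarrow> (real \<Rightarrow> real) \<Rightarrow> real \<Rightarrow> real"
  where "delay_amp m p tau Q \<xi> = (\<Sum>k\<in>{1..m}. p k \<xi> * exp (oint (tau k \<xi>) \<xi> Q))"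

lemma I_ij_delay_amp:
  "I_ij m p tau sg i j t =
     oint (sg j t) t (\<lambda>s. p i s * exp (oint (tau i s) (sg i t)
       (delay_amp m p tau (delay_amp m p tau (\<lambda>_. 0)))))"
proof -
  have "oint a b (\<lambda>_. 0) = 0" for a b by (simp add: oint_def)
  then have "delay_amp m p tau (\<lambda>_. 0) = (\<lambda>u. \<Sum>l\<in>{1..m}. p l u)"
    by (simp add: delay_amp_def fun_eq_iff)
  then show ?thesis unfolding I_ij_def by (simp only: delay_amp_def[abs_def])
qed

locale positive_delay_solution =
  fixes m :: nat and p tau :: "nat \<Rightarrow> real \<Rightarrow> real" and x x' :: "real \<Rightarrow> real" and a :: real
  assumes p_cont: "\<And>i. i \<in> {1..m} \<Longrightarrow> continuous_on {a..} (p i)"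
    and p_nonneg: "\<And>i t. i \<in> {1..m} \<Longrightarrow> t \<ge> a \<Longrightarrow> p i t \<ge> 0"
    and tau_cont: "\<And>i. i \<in> {1..m} \<Longrightarrow> continuous_on {a..} (tau i)"
    and tau_le: "\<And>i t. i \<in> {1..m} \<Longrightarrow> t \<ge> a \<Longrightarrow> tau i t \<le> t"
    and tau_lim: "\<And>i. i \<in> {1..m} \<Longrightarrow> filterlim (tau i) at_top at_top"
    and deriv: "\<And>t. t \<ge> a \<Longrightarrow> (x has_real_derivative x' t) (at t)"
    and equation: "\<And>t. t \<ge> a \<Longrightarrow> x' t = - (\<Sum>i\<in>{1..m}. p i t * x (tau i t))"
    and pos: "\<And>t. t \<ge> a \<Longrightarrow> x t > 0"
begin

lemma delays_eventually_ge:
  obtains N where "\<And>t i. t \<ge> N \<Longrightarrow> i \<in> {1..m} \<Longrightarrow> tau i t \<ge> K"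
proof -
  have "eventually (\<lambda>t. \<forall>i\<in>{1..m}. tau i t \<ge> K) at_top"
    using tau_lim by (intro eventually_ball_finite) (auto simp: filterlim_at_top)
  then obtain N where "\<forall>t\<ge>N. \<forall>i\<in>{1..m}. tau i t \<ge> K"
    by (auto simp: eventually_at_top_linorder)
  then show ?thesis using that by blast
qed

lemma x_continuous: "a \<le> u \<Longrightarrow> continuous_on {u..v} x"
  by (intro continuous_at_imp_continuous_on ballI DERIV_isCont[OF deriv]) auto

definition decays_with :: "(real \<Rightarrow> real) \<Rightarrow> real \<Rightarrow> bool" where
  "decays_with Q c \<longleftrightarrow> a \<le> c \<and> continuous_on {c..} Q \<and>
     (\<forall>u v. c \<le> u \<longrightarrow> u \<le> v \<longrightarrow> x v * exp (integral {u..v} Q) \<le> x u)"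

text \<open>Base case: once all delayed values are positive, \<open>x' \<le> 0\<close>, i.e. decay with rate 0.\<close>
lemma eventually_nonincreasing: obtains c where "decays_with (\<lambda>_. 0) c"
proof -
  obtain N where N: "\<And>t i. t \<ge> N \<Longrightarrow> i \<in> {1..m} \<Longrightarrow> tau i t \<ge> a"
    using delays_eventually_ge[of a] by blast
  define c where "c = max N a"
  have "x' t \<le> 0" if t: "t \<ge> c" for t
  proof -
    have "0 \<le> (\<Sum>i\<in>{1..m}. p i t * x (tau i t))"
      using t N[of t] p_nonneg pos[THEN less_imp_le] by (auto simp: c_def intro!: sum_nonneg mult_nonneg_nonneg)
    then show ?thesis using equation[of t] t by (simp add: c_def)
  qed
  then have "x v \<le> x u" if "c \<le> u" "u \<le> v" for u v
    using exp_integral_decay[of u v x "\<lambda>_. 0" x'] that x_continuous[of u v] deriv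
    by (simp add: c_def)
  then have "decays_with (\<lambda>_. 0) c" by (auto simp: decays_with_def c_def)
  then show ?thesis by (rule that)
qed

lemma decays_bootstrap:
  assumes "decays_with Q c"
  obtains c' where "decays_with (delay_amp m p tau Q) c'"
proof -
  have c: "a \<le> c" and Q: "continuous_on {c..} Q"
    and decay: "\<And>u v. c \<le> u \<Longrightarrow> u \<le> v \<Longrightarrow> x v * exp (integral {u..v} Q) \<le> x u"
    using assms by (auto simp: decays_with_def)
  obtain N where N: "\<And>t i. t \<ge> N \<Longrightarrow> i \<in> {1..m} \<Longrightarrow> tau i t \<ge> c"
    using delays_eventually_ge[of c] by blast
  define c' where "c' = max N c"
  have amp_cont: "continuous_on {c'..} (delay_amp m p tau Q)"
    unfolding delay_amp_def
  proof (intro continuous_on_sum continuous_on_mult continuous_on_exp)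
    fix k assume k: "k \<in> {1..m}"
    have sub: "{c'..} \<subseteq> {a..}" using c by (auto simp: c'_def)
    show "continuous_on {c'..} (p k)" using p_cont[OF k] sub by (rule continuous_on_subset)
    show "continuous_on {c'..} (\<lambda>\<xi>. oint (tau k \<xi>) \<xi> Q)"
      using N k c by (intro continuous_on_oint[OF Q] continuous_on_subset[OF tau_cont[OF k] sub]
          continuous_on_id) (auto simp: c'_def)
  qed
  have amp_bound: "x' u \<le> - delay_amp m p tau Q u * x u" if u: "c' \<le> u" for u
  proof -
    have "p k u * (x u * exp (oint (tau k u) u Q)) \<le> p k u * x (tau k u)" if k: "k \<in> {1..m}" for k
      using decay[of "tau k u" u] N[OF _ k, of u] tau_le[OF k, of u] u p_nonneg[OF k, of u] c
      by (intro mult_left_mono) (auto simp: c'_def oint_eq_integral)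
    then have "(\<Sum>k\<in>{1..m}. p k u * (x u * exp (oint (tau k u) u Q))) \<le> (\<Sum>k\<in>{1..m}. p k u * x (tau k u))"
      by (rule sum_mono)
    moreover have "delay_amp m p tau Q u * x u = (\<Sum>k\<in>{1..m}. p k u * (x u * exp (oint (tau k u) u Q)))"
      unfolding delay_amp_def sum_distrib_right by (simp add: mult_ac)
    ultimately show ?thesis using equation[of u] u c by (simp add: c'_def)
  qed
  have "x v * exp (integral {u..v} (delay_amp m p tau Q)) \<le> x u" if "c' \<le> u" "u \<le> v" for u v
    using that c amp_bound deriv
    by (intro exp_integral_decay[where x'=x'] x_continuous continuous_on_subset[OF amp_cont])
       (auto simp: c'_def)
  then have "decays_with (delay_amp m p tau Q) c'"
    using c amp_cont by (auto simp: decays_with_def c'_def)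
  then show ?thesis by (rule that)
qed

lemma lag_kernel_integrable:
  assumes decay: "decays_with Q c" and i: "i \<in> {1..m}"
    and lag: "\<And>s. r0 \<le> s \<Longrightarrow> s \<le> t \<Longrightarrow> c \<le> tau i s \<and> tau i s \<le> r"
    and r0: "c \<le> r0" "r0 \<le> t"
  shows "(\<lambda>s. p i s * exp (oint (tau i s) r Q)) integrable_on {r0..t}"
proof (intro integrable_continuous_interval continuous_on_mult continuous_on_exp)
  have c: "a \<le> c" and Q: "continuous_on {c..} Q" using decay by (auto simp: decays_with_def)
  have sub: "{r0..t} \<subseteq> {a..}" using c r0 by auto
  show "continuous_on {r0..t} (p i)" using p_cont[OF i] sub by (rule continuous_on_subset)
  show "continuous_on {r0..t} (\<lambda>s. oint (tau i s) r Q)"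
    using lag r0 by (intro continuous_on_oint[OF Q] continuous_on_subset[OF tau_cont[OF i] sub]
        continuous_on_const) force+
qed

text \<open>Key estimate: integrating the equation over \<open>[r\<^sub>j, t]\<close> and bounding each delayed value
  from below by the decay property gives \<open>\<Sum>\<^sub>i x(r\<^sub>i) K\<^sub>i\<^sub>j \<le> x(r\<^sub>j)\<close>.\<close>
lemma lagged_integral_bound:
  assumes decay: "decays_with Q c" and j: "j \<in> {1..m}" and rj: "c \<le> r j" "r j \<le> t"
    and lag: "\<And>i s. i \<in> {1..m} \<Longrightarrow> r j \<le> s \<Longrightarrow> s \<le> t \<Longrightarrow> c \<le> tau i s \<and> tau i s \<le> r i"
  shows "(\<Sum>i\<in>{1..m}. x (r i) * oint (r j) t (\<lambda>s. p i s * exp (oint (tau i s) (r i) Q))) \<le> x (r j)"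
proof -
  have c: "a \<le> c" and Q_decay: "\<And>u v. c \<le> u \<Longrightarrow> u \<le> v \<Longrightarrow> x v * exp (integral {u..v} Q) \<le> x u"
    using decay by (auto simp: decays_with_def)
  define f where "f = (\<lambda>i s. p i s * exp (oint (tau i s) (r i) Q))"
  have f_int: "(f i has_integral oint (r j) t (f i)) {r j..t}" if i: "i \<in> {1..m}" for i
    unfolding f_def oint_eq_integral[OF rj(2)]
    using lag_kernel_integrable[OF decay i lag[OF i] rj] by (rule integrable_integral)
  have ftc: "(x' has_integral x t - x (r j)) {r j..t}"
    using rj c deriv
    by (intro fundamental_theorem_of_calculus)
       (auto simp: has_real_derivative_iff_has_vector_derivative[symmetric]
             intro: has_field_derivative_at_within)
  have pointwise: "(\<Sum>i\<in>{1..m}. x (r i) * f i s) \<le> - x' s" if s: "s \<in> {r j..t}" for s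
  proof -
    have "x (r i) * f i s \<le> p i s * x (tau i s)" if i: "i \<in> {1..m}" for i
    proof -
      have "x (r i) * exp (integral {tau i s..r i} Q) \<le> x (tau i s)"
        using Q_decay lag[OF i] s by auto
      then show ?thesis
        using lag[OF i] s p_nonneg[OF i, of s] rj c mult_left_mono
        by (fastforce simp: f_def oint_eq_integral mult_ac)
    qed
    then have "(\<Sum>i\<in>{1..m}. x (r i) * f i s) \<le> (\<Sum>i\<in>{1..m}. p i s * x (tau i s))"
      by (rule sum_mono)
    then show ?thesis using equation[of s] s rj c by simp
  qed
  have "(\<Sum>i\<in>{1..m}. x (r i) * oint (r j) t (f i)) \<le> x (r j) - x t"
    using has_integral_le[OF has_integral_sum[OF _ has_integral_mult_right[OF f_int]]
        has_integral_neg[OF ftc] pointwise] by simp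
  moreover have "x t > 0" using pos rj c by auto
  ultimately show ?thesis by (simp add: f_def)
qed

lemma eventually_product_bound:
  assumes m: "m \<ge> 1"
    and sg_mono: "\<And>i. i \<in> {1..m} \<Longrightarrow> mono_on {a..} (sg i)"
    and tau_sg: "\<And>i t. i \<in> {1..m} \<Longrightarrow> t \<ge> a \<Longrightarrow> tau i t \<le> sg i t"
    and sg_le: "\<And>i t. i \<in> {1..m} \<Longrightarrow> t \<ge> a \<Longrightarrow> sg i t \<le> t"
  shows "\<forall>\<^sub>F t in at_top.
           (\<Prod>j\<in>{1..m}. (\<Prod>i\<in>{1..m}. I_ij m p tau sg i j t) powr (1 / real m)) \<le> 1 / real m ^ m"
proof -
  define P where "P = delay_amp m p tau (delay_amp m p tau (\<lambda>_. 0))"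
  obtain c0 where "decays_with (\<lambda>_. 0) c0" by (rule eventually_nonincreasing)
  then obtain c1 where "decays_with (delay_amp m p tau (\<lambda>_. 0)) c1" by (rule decays_bootstrap)
  then obtain c where decay: "decays_with P c" unfolding P_def by (rule decays_bootstrap)
  then have c: "a \<le> c" by (simp add: decays_with_def)
  obtain N where N: "\<And>s i. s \<ge> N \<Longrightarrow> i \<in> {1..m} \<Longrightarrow> tau i s \<ge> c"
    using delays_eventually_ge[of c] by blast
  define N' where "N' = max N c"
  obtain T where T: "\<And>t i. t \<ge> T \<Longrightarrow> i \<in> {1..m} \<Longrightarrow> tau i t \<ge> N'"
    using delays_eventually_ge[of N'] by blast
  have "(\<Prod>j\<in>{1..m}. (\<Prod>i\<in>{1..m}. I_ij m p tau sg i j t) powr (1 / real m)) \<le> 1 / real m ^ m"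
    if t: "t \<ge> max T N'" for t
  proof -
    have ta: "t \<ge> a" using t c by (simp add: N'_def)
    have sg_big: "sg i t \<ge> N'" if i: "i \<in> {1..m}" for i
      using T[OF _ i, of t] tau_sg[OF i ta] t by simp
    have lag: "c \<le> tau i s \<and> tau i s \<le> sg i t"
      if i: "i \<in> {1..m}" and j: "j \<in> {1..m}" and s: "sg j t \<le> s" "s \<le> t" for i j s
    proof
      have "s \<ge> N'" using sg_big[OF j] s by simp
      then show "c \<le> tau i s" using N[OF _ i, of s] by (simp add: N'_def)
      have "sg i s \<le> sg i t" using \<open>s \<ge> N'\<close> c s ta by (auto simp: N'_def intro: mono_onD[OF sg_mono[OF i]])
      then show "tau i s \<le> sg i t" using tau_sg[OF i, of s] \<open>s \<ge> N'\<close> c by (simp add: N'_def)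
    qed
    have sgj: "c \<le> sg j t" "sg j t \<le> t" if j: "j \<in> {1..m}" for j
      using sg_big[OF j] sg_le[OF j ta] by (auto simp: N'_def)
    show ?thesis
    proof (rule amgm_matrix_bound[OF m])
      show "0 < x (sg j t)" if "j \<in> {1..m}" for j using pos sgj[OF that] c by simp
      show "0 \<le> I_ij m p tau sg i j t" if i: "i \<in> {1..m}" and j: "j \<in> {1..m}" for i j
        unfolding I_ij_delay_amp P_def[symmetric] oint_eq_integral[OF sgj(2)[OF j]]
        using lag_kernel_integrable[OF decay i lag[OF i j] sgj[OF j]] sgj(1)[OF j] c
        by (intro integral_nonneg) (auto intro!: mult_nonneg_nonneg p_nonneg[OF i])
      show "(\<Sum>i\<in>{1..m}. x (sg i t) * I_ij m p tau sg i j t) \<le> x (sg j t)" if j: "j \<in> {1..m}" for j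
        unfolding I_ij_delay_amp P_def[symmetric]
        using lagged_integral_bound[OF decay j, of "\<lambda>i. sg i t" t] lag[OF _ j] sgj[OF j] by simp
    qed
  qed
  then show ?thesis unfolding eventually_at_top_linorder by blast
qed

end

lemma eventually_positive_solution_bound:
  fixes m :: nat and t0 :: real and p tau sg :: "nat \<Rightarrow> real \<Rightarrow> real"
  assumes m: "m \<ge> 1"
    and p_cont: "\<And>i. i \<in> {1..m} \<Longrightarrow> continuous_on {t0..} (p i)"
    and p_nonneg: "\<And>i t. i \<in> {1..m} \<Longrightarrow> t \<ge> t0 \<Longrightarrow> p i t \<ge> 0"
    and tau_cont: "\<And>i. i \<in> {1..m} \<Longrightarrow> continuous_on {t0..} (tau i)"
    and tau_le: "\<And>i t. i \<in> {1..m} \<Longrightarrow> t \<ge> t0 \<Longrightarrow> tau i t \<le> t"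
    and tau_lim: "\<And>i. i \<in> {1..m} \<Longrightarrow> filterlim (tau i) at_top at_top"
    and sg_mono: "\<And>i. i \<in> {1..m} \<Longrightarrow> mono_on {t0..} (sg i)"
    and tau_sg: "\<And>i t. i \<in> {1..m} \<Longrightarrow> t \<ge> t0 \<Longrightarrow> tau i t \<le> sg i t"
    and sg_le: "\<And>i t. i \<in> {1..m} \<Longrightarrow> t \<ge> t0 \<Longrightarrow> sg i t \<le> t"
    and sol: "is_solution m t0 p tau x T0"
    and pos: "\<forall>t\<ge>T1. x t > 0"
  shows "\<forall>\<^sub>F t in at_top.
           (\<Prod>j\<in>{1..m}. (\<Prod>i\<in>{1..m}. I_ij m p tau sg i j t) powr (1 / real m)) \<le> 1 / real m ^ m"
proof -
  define Ti where "Ti = tau_inv m t0 tau T0"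
  from sol obtain x' where
    dw: "\<And>t. t \<ge> Ti \<Longrightarrow> (x has_real_derivative x' t) (at t within {Ti..})"
    and eq: "\<And>t. t \<ge> Ti \<Longrightarrow> x' t + (\<Sum>i\<in>{1..m}. p i t * x (tau i t)) = 0"
    unfolding is_solution_def Ti_def by blast
  define a where "a = max (max T1 t0) Ti + 1"
  have sub: "{a..} \<subseteq> {t0..}" by (auto simp: a_def)
  have "(x has_real_derivative x' t) (at t)" if t: "t \<ge> a" for t
  proof -
    have "(x has_real_derivative x' t) (at t within {Ti<..})"
      by (rule DERIV_subset[OF dw]) (use t in \<open>auto simp: a_def\<close>)
    moreover have "at t within {Ti<..} = at t" using t by (intro at_within_open) (auto simp: a_def)
    ultimately show ?thesis by simp
  qed
  moreover have "x' t = - (\<Sum>i\<in>{1..m}. p i t * x (tau i t))" if "t \<ge> a" for t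
  proof -
    have "t \<ge> Ti" using that by (simp add: a_def)
    then show ?thesis using eq by (simp add: eq_neg_iff_add_eq_0)
  qed
  ultimately interpret positive_delay_solution m p tau x x' a
    by unfold_locales
      (use continuous_on_subset[OF p_cont sub] continuous_on_subset[OF tau_cont sub]
         p_nonneg tau_le tau_lim pos sub in \<open>auto simp: a_def\<close>)
  show ?thesis
  proof (rule eventually_product_bound[OF m])
    show "mono_on {a..} (sg i)" if "i \<in> {1..m}" for i
      using sg_mono[OF that] sub by (rule mono_on_subset)
  qed (use tau_sg sg_le sub in auto)
qed

theorem theorem3p1:
  fixes m :: nat and t0 :: real
    and p tau sg :: "nat \<Rightarrow> real \<Rightarrow> real"
  assumes m: "m \<ge> 1"
    and p_cont: "\<And>i. i \<in> {1..m} \<Longrightarrow> continuous_on {t0..} (p i)"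
    and p_nonneg: "\<And>i t. i \<in> {1..m} \<Longrightarrow> t \<ge> t0 \<Longrightarrow> p i t \<ge> 0"
    and tau_cont: "\<And>i. i \<in> {1..m} \<Longrightarrow> continuous_on {t0..} (tau i)"
    and tau_nonneg: "\<And>i t. i \<in> {1..m} \<Longrightarrow> t \<ge> t0 \<Longrightarrow> tau i t \<ge> 0"
    and tau_le: "\<And>i t. i \<in> {1..m} \<Longrightarrow> t \<ge> t0 \<Longrightarrow> tau i t \<le> t"
    and tau_lim: "\<And>i. i \<in> {1..m} \<Longrightarrow> filterlim (tau i) at_top at_top"
    and sg_cont: "\<And>i. i \<in> {1..m} \<Longrightarrow> continuous_on {t0..} (sg i)"
    and sg_mono: "\<And>i. i \<in> {1..m} \<Longrightarrow> mono_on {t0..} (sg i)"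
    and tau_sg: "\<And>i t. i \<in> {1..m} \<Longrightarrow> t \<ge> t0 \<Longrightarrow> tau i t \<le> sg i t"
    and sg_le: "\<And>i t. i \<in> {1..m} \<Longrightarrow> t \<ge> t0 \<Longrightarrow> sg i t \<le> t"
    and cond: "Limsup at_top (\<lambda>t. ereal (\<Prod>j\<in>{1..m}.
                 (\<Prod>i\<in>{1..m}. I_ij m p tau sg i j t) powr (1 / real m)))
               > ereal (1 / real m ^ m)"
  shows "\<forall>x T0. is_solution m t0 p tau x T0 \<longrightarrow> oscillatory x"
proof (intro allI impI)
  fix x T0 assume sol: "is_solution m t0 p tau x T0"
  let ?G = "\<lambda>t. \<Prod>j\<in>{1..m}. (\<Prod>i\<in>{1..m}. I_ij m p tau sg i j t) powr (1 / real m)"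
  have bound: "\<forall>\<^sub>F t in at_top. ?G t \<le> 1 / real m ^ m"
    if "is_solution m t0 p tau y T0" "\<forall>t\<ge>T1. y t > 0" for y T1
    using eventually_positive_solution_bound[OF m p_cont p_nonneg tau_cont tau_le tau_lim
        sg_mono tau_sg sg_le that] .
  show "oscillatory x"
  proof (rule ccontr)
    assume "\<not> oscillatory x"
    then obtain T where nz: "\<And>t. t \<ge> T \<Longrightarrow> x t \<noteq> 0" unfolding oscillatory_def by auto
    have "continuous_on {T0..} x" using sol by (simp add: is_solution_def)
    then have "\<forall>\<^sub>F t in at_top. ?G t \<le> 1 / real m ^ m"
      by (rule eventually_constant_sign[OF _ nz])
         (use bound[OF sol] bound[OF is_solution_uminus[OF sol]] in blast)+
    then have "Limsup at_top (\<lambda>t. ereal (?G t)) \<le> ereal (1 / real m ^ m)"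
      by (intro Limsup_bounded) (simp add: eventually_mono)
    with cond show False by simp
  qed
qed

end
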